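(* \[\sum_{\pi\in\mathcal{C}_2}q^{|\pi|}=\sum_{m\ge0}\frac{q^{\binom{m+1}{2}}}{(q;q)_m}\sum_{j\ge0}q^{\binom j2}{m\brack j}.\]
   Context: An overpartition is a partition in which the first occurrence of each part size may be overlined, with parts listed in non-increasing order with respect to $1<\bar1<2<\bar2<\cdots$. A part is of size $t$ if it is $t$ or $\bar t$, and $|\pi|$ is the sum of the sizes of the parts. $\mathcal{C}_2$ is the set of overpartitions $(\pi_1,\dots,\pi_\ell)$, including the empty one, such that: - for each $1\le i<\ell$, the size of $\pi_i$ minus the size of $\pi_{i+1}$ is at least $1$, and at least $2$ if $\pi_i$ is non-overlined; - at most one part equals the non-overlined part $1$. $(q;q)_n=\prod_{i=1}^n(1-q^i)$. The Gaussian binomial is ${M\brack N}=\frac{(q;q)_M}{(q;q)_N(q;q)_{M-N}}$ for $0\le N\le M$ and $0$ otherwise. *)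

theory Defs
  imports "HOL-Computational_Algebra.Formal_Power_Series"
begin

text \<open>(part_key encodes the total order t < tbar < t+1 as 2t < 2t+1 < 2t+2.) An overpartition is a list of parts; a part is a pair (t, b) where t is its size
  and b says whether it is overlined.\<close>

definition part_key :: "nat \<times> bool \<Rightarrow> nat" where
  "part_key p = 2 * fst p + (if snd p then 1 else 0)"

definition is_overpartition :: "(nat \<times> bool) list \<Rightarrow> bool" where
  "is_overpartition \<pi> \<longleftrightarrow>
     (\<forall>p\<in>set \<pi>. fst p \<ge> 1) \<and>
     sorted_wrt (\<lambda>p r. part_key r \<le> part_key p) \<pi> \<and>
     (\<forall>i j. i < j \<and> j < length \<pi> \<and> fst (\<pi> ! i) = fst (\<pi> ! j) \<longrightarrow> \<not> snd (\<pi> ! j))"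

definition op_size :: "(nat \<times> bool) list \<Rightarrow> nat" where
  "op_size \<pi> = (\<Sum>p\<leftarrow>\<pi>. fst p)"

definition C2 :: "(nat \<times> bool) list set" where
  "C2 = {\<pi>. is_overpartition \<pi> \<and>
            (\<forall>i. Suc i < length \<pi> \<longrightarrow>
               int (fst (\<pi> ! i)) - int (fst (\<pi> ! Suc i)) \<ge> (if snd (\<pi> ! i) then 1 else 2)) \<and>
            length (filter (\<lambda>p. p = (1, False)) \<pi>) \<le> 1}"

definition C2_gf :: "rat fps" where
  "C2_gf = Abs_fps (\<lambda>n. of_nat (card {\<pi> \<in> C2. op_size \<pi> = n}))"

definition qpoch :: "nat \<Rightarrow> rat fps" where
  "qpoch n = (\<Prod>i=1..n. 1 - fps_X ^ i)"

definition qbinom :: "nat \<Rightarrow> nat \<Rightarrow> rat fps" where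
  "qbinom M N = (if N \<le> M then qpoch M * inverse (qpoch N * qpoch (M - N)) else 0)"

end

theory Submission
  imports Defs
begin

text \<open>Read an element of C2 from its smallest part upwards. Let G(m, a) count the increasing
  lists of m parts obeying the gap conditions of C2 whose first part is at least a (at least
  a + 1 if it is not overlined). Adding 1 to every part gives G(m, a + 1) = q^m G(m, a), and
  splitting off the first part gives
  G(m + 1, a) = q^a G(m, a + 1) + q^(a+1) G(m, a + 2) + G(m + 1, a + 1).
  At a = 0 these combine to (1 - q^(m+1)) G(m + 1, 0) = q^m (1 + q^(m+1)) G(m, 0), so
  (q;q)_m G(m, 0) = q^binom(m,2) \<Prod>k<m. (1 + q^(k+1)). The elements of C2 with m + 1 parts are
  counted by G(m + 1, 1) + q G(m, 2), the second term accounting for a smallest part 1, hence by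
  q^binom(m+2,2) \<Prod>k\<le>m. (1 + q^k) / (q;q)_(m+1); the q-binomial theorem turns this into the
  summand of the theorem. As a list in C2 has at most as many parts as its size, the sum over
  the number of parts converges coefficientwise.\<close>

lemma op_size_Nil [simp]: "op_size [] = 0"
  and op_size_Cons [simp]: "op_size (p # \<pi>) = fst p + op_size \<pi>"
  by (simp_all add: op_size_def)

lemma op_size_rev [simp]: "op_size (rev \<pi>) = op_size \<pi>"
  by (simp add: op_size_def rev_map[symmetric] sum_list_rev)

lemma op_size_map_apfst_Suc: "op_size (map (apfst Suc) \<pi>) = op_size \<pi> + length \<pi>"
  by (induction \<pi>) auto

lemma length_le_op_size: "(\<And>p. p \<in> set \<pi> \<Longrightarrow> 1 \<le> fst p) \<Longrightarrow> length \<pi> \<le> op_size \<pi>"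
  by (induction \<pi>) fastforce+

lemma finite_length_op_size: "finite {\<pi>. length \<pi> = m \<and> op_size \<pi> = n}"
proof (rule finite_subset)
  have "fst p \<le> op_size \<pi>" if "p \<in> set \<pi>" for p \<pi>
    using that member_le_sum_list[of "fst p" "map fst \<pi>"] by (force simp: op_size_def)
  then show "{\<pi>. length \<pi> = m \<and> op_size \<pi> = n} \<subseteq> {\<pi>. set \<pi> \<subseteq> {0..n} \<times> UNIV \<and> length \<pi> = m}"
    by fastforce
  show "finite {\<pi>. set \<pi> \<subseteq> {0..n} \<times> (UNIV :: bool set) \<and> length \<pi> = m}"
    by (rule finite_lists_length_eq) auto
qed

definition gf :: "(nat \<times> bool) list set \<Rightarrow> rat fps" where
  "gf A = Abs_fps (\<lambda>n. of_nat (card {\<pi> \<in> A. op_size \<pi> = n}))"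

lemma C2_gf_eq_gf: "C2_gf = gf C2"
  by (simp add: C2_gf_def gf_def)

lemma gf_Nil: "gf {[]} = 1"
proof (rule fps_ext)
  fix n
  have "{\<pi> \<in> {[]}. op_size \<pi> = n} = (if n = 0 then {[]} else {})" by auto
  then show "fps_nth (gf {[]}) n = fps_nth 1 n" by (simp add: gf_def)
qed

lemma gf_image_rev: "gf (rev ` A) = gf A"
proof -
  have "{\<pi> \<in> rev ` A. op_size \<pi> = n} = rev ` {\<pi> \<in> A. op_size \<pi> = n}" for n
    by auto
  then show ?thesis by (simp add: gf_def card_image)
qed

lemma gf_image_Cons: "gf ((#) p ` A) = fps_X ^ fst p * gf A"
proof (rule fps_ext)
  fix n
  have "{\<pi> \<in> (#) p ` A. op_size \<pi> = n} =
          (if n < fst p then {} else (#) p ` {\<pi> \<in> A. op_size \<pi> = n - fst p})"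
    by auto
  then show "fps_nth (gf ((#) p ` A)) n = fps_nth (fps_X ^ fst p * gf A) n"
    by (simp add: gf_def fps_X_power_mult_nth card_image)
qed

lemma gf_image_map_apfst_Suc:
  assumes "\<And>\<pi>. \<pi> \<in> A \<Longrightarrow> length \<pi> = m"
  shows "gf (map (apfst Suc) ` A) = fps_X ^ m * gf A"
proof (rule fps_ext)
  fix n
  have inj: "inj (map (apfst Suc :: nat \<times> bool \<Rightarrow> _))"
    by (simp add: inj_mapI)
  have "{\<pi> \<in> map (apfst Suc) ` A. op_size \<pi> = n} =
          (if n < m then {} else map (apfst Suc) ` {\<pi> \<in> A. op_size \<pi> = n - m})"
    using assms by (auto simp: op_size_map_apfst_Suc)
  then show "fps_nth (gf (map (apfst Suc) ` A)) n = fps_nth (fps_X ^ m * gf A) n"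
    using inj by (simp add: gf_def fps_X_power_mult_nth card_image inj_on_subset[OF inj])
qed

text \<open>The common length only serves to make the sets of lists of a given size finite.\<close>

lemma gf_Un_disjoint:
  assumes "A \<inter> B = {}" and "\<And>\<pi>. \<pi> \<in> A \<union> B \<Longrightarrow> length \<pi> = m"
  shows "gf (A \<union> B) = gf A + gf B"
proof (rule fps_ext)
  fix n
  have "finite {\<pi> \<in> X. op_size \<pi> = n}" if "X \<subseteq> A \<union> B" for X
    by (rule finite_subset[OF _ finite_length_op_size[of m n]]) (use assms that in auto)
  moreover have "{\<pi> \<in> A \<union> B. op_size \<pi> = n} = {\<pi> \<in> A. op_size \<pi> = n} \<union> {\<pi> \<in> B. op_size \<pi> = n}"
    by auto
  ultimately show "fps_nth (gf (A \<union> B)) n = fps_nth (gf A + gf B) n"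
    using assms(1) by (simp add: gf_def card_Un_disjoint disjoint_iff)
qed

lemma gf_sums_length_slices:
  assumes "\<And>\<pi>. \<pi> \<in> A \<Longrightarrow> length \<pi> \<le> op_size \<pi>"
  shows "(\<lambda>m. gf {\<pi> \<in> A. length \<pi> = m}) sums gf A"
  unfolding sums_def
proof (rule tendsto_fpsI)
  fix n
  have "fps_nth (\<Sum>m<N. gf {\<pi> \<in> A. length \<pi> = m}) n = fps_nth (gf A) n" if "n < N" for N
  proof -
    have "{\<pi> \<in> A. op_size \<pi> = n} = (\<Union>m<N. {\<pi> \<in> {\<pi> \<in> A. length \<pi> = m}. op_size \<pi> = n})"
    proof (intro set_eqI iffI)
      fix \<pi> assume \<pi>: "\<pi> \<in> {\<pi> \<in> A. op_size \<pi> = n}"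
      then have "length \<pi> < N" using assms[of \<pi>] that by simp
      with \<pi> show "\<pi> \<in> (\<Union>m<N. {\<pi> \<in> {\<pi> \<in> A. length \<pi> = m}. op_size \<pi> = n})"
        by (intro UN_I[of "length \<pi>"]) auto
    qed blast
    then have "card {\<pi> \<in> A. op_size \<pi> = n} = (\<Sum>m<N. card {\<pi> \<in> {\<pi> \<in> A. length \<pi> = m}. op_size \<pi> = n})"
      by (simp only:) (rule card_UN_disjoint, auto intro: finite_subset[OF _ finite_length_op_size])
    then show ?thesis
      by (simp add: gf_def fps_sum_nth)
  qed
  then show "eventually (\<lambda>N. fps_nth (\<Sum>m<N. gf {\<pi> \<in> A. length \<pi> = m}) n = fps_nth (gf A) n) sequentially"
    unfolding eventually_sequentially by (intro exI[of _ "Suc n"]) auto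
qed

fun gapped_from :: "nat \<Rightarrow> (nat \<times> bool) list \<Rightarrow> bool" where
  "gapped_from a [] = True"
| "gapped_from a (p # \<sigma>) \<longleftrightarrow> a + (if snd p then 0 else 1) \<le> fst p \<and> gapped_from (Suc (fst p)) \<sigma>"

text \<open>The lists counted by G(m, a) above.\<close>

definition gapped_lists :: "nat \<Rightarrow> nat \<Rightarrow> (nat \<times> bool) list set" where
  "gapped_lists m a = {\<sigma>. length \<sigma> = m \<and> gapped_from a \<sigma>}"

lemma gapped_from_SucD: "gapped_from (Suc a) \<sigma> \<Longrightarrow> gapped_from a \<sigma>"
  by (cases \<sigma>) auto

lemma gapped_from_ge: "gapped_from a \<sigma> \<Longrightarrow> p \<in> set \<sigma> \<Longrightarrow> a \<le> fst p"
  by (induction a \<sigma> rule: gapped_from.induct) fastforce+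

lemma gapped_from_map_apfst_Suc: "gapped_from (Suc a) (map (apfst Suc) \<sigma>) \<longleftrightarrow> gapped_from a \<sigma>"
  by (induction a \<sigma> rule: gapped_from.induct) auto

lemma gapped_lists_Suc_bound: "gapped_lists m (Suc a) = map (apfst Suc) ` gapped_lists m a"
proof (intro set_eqI iffI)
  fix \<sigma> assume \<sigma>: "\<sigma> \<in> gapped_lists m (Suc a)"
  define \<tau> where "\<tau> = map (apfst (\<lambda>t. t - 1)) \<sigma>"
  have "p \<in> set \<sigma> \<Longrightarrow> Suc a \<le> fst p" for p
    using \<sigma> gapped_from_ge[of "Suc a" \<sigma> p] by (simp add: gapped_lists_def)
  then have lift: "map (apfst Suc) \<tau> = \<sigma>"
    unfolding \<tau>_def map_map by (intro map_idI) (force simp: apfst_def map_prod_def)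
  moreover have "\<tau> \<in> gapped_lists m a"
    using \<sigma> lift gapped_from_map_apfst_Suc[of a \<tau>] by (simp add: gapped_lists_def \<tau>_def)
  ultimately show "\<sigma> \<in> map (apfst Suc) ` gapped_lists m a" by blast
next
  fix \<sigma> assume "\<sigma> \<in> map (apfst Suc) ` gapped_lists m a"
  then show "\<sigma> \<in> gapped_lists m (Suc a)"
    by (clarsimp simp: gapped_lists_def gapped_from_map_apfst_Suc)
qed

lemma gf_gapped_lists_Suc_bound: "gf (gapped_lists m (Suc a)) = fps_X ^ m * gf (gapped_lists m a)"
  unfolding gapped_lists_Suc_bound by (rule gf_image_map_apfst_Suc) (simp add: gapped_lists_def)

lemma gf_gapped_lists: "gf (gapped_lists m a) = fps_X ^ (m * a) * gf (gapped_lists m 0)"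
  by (induction a) (simp_all add: gf_gapped_lists_Suc_bound power_add mult.assoc)

lemma gapped_lists_Suc:
  "gapped_lists (Suc m) a =
     (#) (a, True) ` gapped_lists m (Suc a) \<union> (#) (Suc a, False) ` gapped_lists m (Suc (Suc a))
     \<union> gapped_lists (Suc m) (Suc a)"
proof (intro set_eqI iffI)
  fix \<sigma> assume "\<sigma> \<in> gapped_lists (Suc m) a"
  then obtain t b \<rho> where \<sigma>: "\<sigma> = (t, b) # \<rho>" "length \<rho> = m" "gapped_from (Suc t) \<rho>"
    and first: "a + (if b then 0 else 1) \<le> t"
    by (auto simp: gapped_lists_def length_Suc_conv)
  consider "t = a" "b" | "t = Suc a" "\<not> b" | "Suc a + (if b then 0 else 1) \<le> t"
    using first by (cases b; cases "t = a + (if b then 0 else 1)") auto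
  then show "\<sigma> \<in> (#) (a, True) ` gapped_lists m (Suc a) \<union> (#) (Suc a, False) ` gapped_lists m (Suc (Suc a))
     \<union> gapped_lists (Suc m) (Suc a)"
    using \<sigma> by cases (auto simp: gapped_lists_def)
qed (auto simp: gapped_lists_def dest: gapped_from_SucD)

lemma gf_gapped_lists_Suc:
  "gf (gapped_lists (Suc m) a) =
     fps_X ^ a * gf (gapped_lists m (Suc a)) + fps_X ^ Suc a * gf (gapped_lists m (Suc (Suc a)))
     + gf (gapped_lists (Suc m) (Suc a))"
proof -
  let ?A = "(#) (a, True) ` gapped_lists m (Suc a)"
  let ?B = "(#) (Suc a, False) ` gapped_lists m (Suc (Suc a))"
  let ?C = "gapped_lists (Suc m) (Suc a)"
  have len: "length \<sigma> = Suc m" if "\<sigma> \<in> ?A \<union> ?B \<union> ?C" for \<sigma>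
    using that by (auto simp: gapped_lists_def)
  have "gf (?A \<union> ?B \<union> ?C) = gf (?A \<union> ?B) + gf ?C"
    by (rule gf_Un_disjoint[OF _ len]) (auto simp: gapped_lists_def)
  also have "gf (?A \<union> ?B) = gf ?A + gf ?B"
    by (rule gf_Un_disjoint[where m = "Suc m"]) (use len in auto)
  finally show ?thesis
    by (simp add: gapped_lists_Suc[of m a] gf_image_Cons)
qed

lemma gf_gapped_lists_recurrence:
  "(1 - fps_X ^ Suc m) * gf (gapped_lists (Suc m) 0) =
     fps_X ^ m * (1 + fps_X ^ Suc m) * gf (gapped_lists m 0)"
proof -
  have "gf (gapped_lists (Suc m) 0) =
          fps_X ^ m * gf (gapped_lists m 0) + fps_X * (fps_X ^ (m * 2) * gf (gapped_lists m 0))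
          + fps_X ^ Suc m * gf (gapped_lists (Suc m) 0)"
    using gf_gapped_lists_Suc[of m 0] gf_gapped_lists[of m 1] gf_gapped_lists[of m 2]
      gf_gapped_lists[of "Suc m" 1]
    by (simp add: numeral_2_eq_2)
  then show ?thesis
    by (simp add: algebra_simps power_add mult_2_right)
qed

lemma qpoch_0 [simp]: "qpoch 0 = 1"
  by (simp add: qpoch_def)

lemma qpoch_Suc: "qpoch (Suc n) = qpoch n * (1 - fps_X ^ Suc n)"
  by (simp add: qpoch_def)

lemma fps_nth_qpoch_0 [simp]: "fps_nth (qpoch n) 0 = 1"
  by (induction n) (simp_all add: qpoch_Suc)

lemma qpoch_nonzero [simp]: "qpoch n \<noteq> 0"
  using fps_nth_qpoch_0[of n] by (metis fps_zero_nth zero_neq_one)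

lemma choose_two_Suc: "Suc j choose 2 = (j choose 2) + j"
  by (simp add: numeral_2_eq_2)

lemma qpoch_mult_gf_gapped_lists:
  "qpoch m * gf (gapped_lists m 0) = fps_X ^ (m choose 2) * (\<Prod>k<m. 1 + fps_X ^ Suc k)"
proof (induction m)
  case 0
  have "gapped_lists 0 0 = {[]}" by (auto simp: gapped_lists_def)
  then show ?case by (simp add: gf_Nil binomial_eq_0)
next
  case (Suc m)
  have "qpoch (Suc m) * gf (gapped_lists (Suc m) 0) =
          qpoch m * ((1 - fps_X ^ Suc m) * gf (gapped_lists (Suc m) 0))"
    by (simp add: qpoch_Suc mult_ac)
  also have "\<dots> = fps_X ^ m * (1 + fps_X ^ Suc m) * (qpoch m * gf (gapped_lists m 0))"
    by (simp only: gf_gapped_lists_recurrence) (simp add: mult_ac)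
  also have "\<dots> = fps_X ^ (Suc m choose 2) * (\<Prod>k<Suc m. 1 + fps_X ^ Suc k)"
    by (simp add: Suc.IH choose_two_Suc power_add mult_ac)
  finally show ?case .
qed

lemma C2_iff_successively:
  "\<pi> \<in> C2 \<longleftrightarrow>
     (\<forall>p\<in>set \<pi>. 1 \<le> fst p) \<and> successively (\<lambda>p r. fst r + (if snd p then 1 else 2) \<le> fst p) \<pi>"
  (is "_ \<longleftrightarrow> ?pos \<and> successively ?gap \<pi>")
proof
  assume "\<pi> \<in> C2"
  then show "?pos \<and> successively ?gap \<pi>"
    by (auto simp: C2_def is_overpartition_def successively_conv_nth split: if_splits)
next
  assume pos_gap: "?pos \<and> successively ?gap \<pi>"
  have "successively (\<lambda>p r. fst r < fst p) \<pi>"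
    by (rule successively_mono[OF pos_gap[THEN conjunct2]]) (auto split: if_splits)
  then have strict: "sorted_wrt (\<lambda>p r. fst r < fst p) \<pi>"
    by (subst (asm) successively_conv_sorted_wrt) (auto simp: transp_def)
  have "sorted_wrt (\<lambda>p r. part_key r \<le> part_key p) \<pi>"
    by (rule sorted_wrt_mono_rel[OF _ strict]) (auto simp: part_key_def)
  moreover have "\<not> snd (\<pi> ! j)" if "i < j" "j < length \<pi>" "fst (\<pi> ! i) = fst (\<pi> ! j)" for i j
    using sorted_wrt_nth_less[OF strict that(1,2)] that(3) by simp
  moreover have "length (filter (\<lambda>p. p = (1, False)) \<pi>) \<le> 1"
  proof -
    have "distinct \<pi>"
      using strict by (induction \<pi>) auto
    then show ?thesis
      by (simp add: distinct_length_filter card_le_Suc0_iff_eq)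
  qed
  ultimately show "\<pi> \<in> C2"
    using pos_gap by (auto simp: C2_def is_overpartition_def successively_conv_nth)
qed

lemma snoc_in_C2_iff: "\<pi> @ [p] \<in> C2 \<longleftrightarrow> 1 \<le> fst p \<and> gapped_from (Suc (fst p)) (rev \<pi>)"
proof -
  have gap: "successively (\<lambda>x y. fst x + (if snd y then 1 else 2) \<le> fst y) (p # \<rho>) \<longleftrightarrow>
          gapped_from (Suc (fst p)) \<rho>" for p \<rho>
    by (induction \<rho> arbitrary: p) (auto simp: successively_Cons)
  have "\<pi> @ [p] \<in> C2 \<longleftrightarrow> rev (p # rev \<pi>) \<in> C2"
    by simp
  also have "\<dots> \<longleftrightarrow> (\<forall>q\<in>set (p # rev \<pi>). 1 \<le> fst q) \<and>
          successively (\<lambda>x y. fst x + (if snd y then 1 else 2) \<le> fst y) (p # rev \<pi>)"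
    unfolding C2_iff_successively successively_rev set_rev ..
  finally show ?thesis
    unfolding gap by (auto dest: gapped_from_ge)
qed

lemma rev_C2_length_Suc:
  "rev ` {\<pi> \<in> C2. length \<pi> = Suc m} = gapped_lists (Suc m) 1 \<union> (#) (1, False) ` gapped_lists m 2"
proof -
  have "\<sigma> \<in> gapped_lists (Suc m) 1 \<union> (#) (1, False) ` gapped_lists m 2 \<longleftrightarrow>
          length \<sigma> = Suc m \<and> rev \<sigma> \<in> C2" for \<sigma>
    by (cases \<sigma>; cases "hd \<sigma> = (1, False)") (auto simp: gapped_lists_def snoc_in_C2_iff numeral_2_eq_2)
  then show ?thesis
    by (auto simp: set_eq_iff image_iff)
qed

lemma gf_C2_length_Suc:
  "gf {\<pi> \<in> C2. length \<pi> = Suc m} = gf (gapped_lists (Suc m) 1) + fps_X * gf (gapped_lists m 2)"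
proof -
  have "gf {\<pi> \<in> C2. length \<pi> = Suc m} = gf (gapped_lists (Suc m) 1 \<union> (#) (1, False) ` gapped_lists m 2)"
    by (simp only: gf_image_rev flip: rev_C2_length_Suc)
  also have "\<dots> = gf (gapped_lists (Suc m) 1) + gf ((#) (1, False) ` gapped_lists m 2)"
    by (rule gf_Un_disjoint[where m = "Suc m"]) (auto simp: gapped_lists_def)
  finally show ?thesis
    by (simp add: gf_image_Cons)
qed

lemma qpoch_mult_gf_C2_length:
  "qpoch m * gf {\<pi> \<in> C2. length \<pi> = m} = fps_X ^ (Suc m choose 2) * (\<Prod>k<m. 1 + fps_X ^ k)"
proof (cases m)
  case 0
  have "{\<pi> \<in> C2. length \<pi> = 0} = {[]}"
    by (auto simp: C2_iff_successively)
  then show ?thesis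
    using 0 by (simp add: gf_Nil binomial_eq_0)
next
  case (Suc k)
  define N where "N = k choose 2"
  define Q where "Q = (\<Prod>i<k. 1 + fps_X ^ Suc i :: rat fps)"
  have closed_Suc: "qpoch (Suc k) * gf (gapped_lists (Suc k) 0) = fps_X ^ (N + k) * (Q * (1 + fps_X ^ Suc k))"
    by (simp add: qpoch_mult_gf_gapped_lists choose_two_Suc N_def Q_def)
  have closed: "qpoch k * gf (gapped_lists k 0) = fps_X ^ N * Q"
    by (simp add: qpoch_mult_gf_gapped_lists N_def Q_def)
  have "qpoch (Suc k) * gf {\<pi> \<in> C2. length \<pi> = Suc k} =
          fps_X ^ Suc k * (qpoch (Suc k) * gf (gapped_lists (Suc k) 0))
          + fps_X ^ (2 * k + 1) * (1 - fps_X ^ Suc k) * (qpoch k * gf (gapped_lists k 0))"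
    using gf_gapped_lists[of "Suc k" 1] gf_gapped_lists[of k 2]
    by (simp add: gf_C2_length_Suc qpoch_Suc algebra_simps power_add)
  also have "\<dots> = (fps_X ^ Suc k * fps_X ^ (N + k)) * Q * (1 + fps_X ^ Suc k)
                   + (fps_X ^ (2 * k + 1) * fps_X ^ N) * Q * (1 - fps_X ^ Suc k)"
    unfolding closed_Suc closed by (simp only: mult_ac)
  also have "\<dots> = fps_X ^ (N + 2 * k + 1) * (2 * Q)"
  proof -
    have "fps_X ^ Suc k * fps_X ^ (N + k) = (fps_X ^ (N + 2 * k + 1) :: rat fps)"
      and "fps_X ^ (2 * k + 1) * fps_X ^ N = (fps_X ^ (N + 2 * k + 1) :: rat fps)"
      by (simp_all only: power_add[symmetric]) simp_all
    moreover have "x * Q * (1 + z) + x * Q * (1 - z) = x * (2 * Q)" for x z :: "rat fps"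
      by (simp add: algebra_simps mult_2)
    ultimately show ?thesis
      by (simp only:)
  qed
  also have "\<dots> = fps_X ^ (Suc (Suc k) choose 2) * (\<Prod>i<Suc k. 1 + fps_X ^ i)"
    by (subst prod.lessThan_Suc_shift) (simp add: choose_two_Suc N_def Q_def)
  finally show ?thesis
    using Suc by simp
qed

lemma qbinom_mult_qpoch:
  assumes "N \<le> M" shows "qbinom M N * (qpoch N * qpoch (M - N)) = qpoch M"
proof -
  have "inverse (qpoch N * qpoch (M - N)) * (qpoch N * qpoch (M - N)) = 1"
    by (rule inverse_mult_eq_1) simp
  then show ?thesis
    using assms by (simp add: qbinom_def mult.assoc)
qed

lemma qbinom_eqI:
  assumes "N \<le> M" and "x * (qpoch N * qpoch (M - N)) = qpoch M"
  shows "qbinom M N = x"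
proof -
  have "(qbinom M N - x) * (qpoch N * qpoch (M - N)) = 0"
    using qbinom_mult_qpoch[OF assms(1)] assms(2) by (simp add: algebra_simps)
  then show ?thesis by simp
qed

lemma qbinom_0_right [simp]: "qbinom M 0 = 1"
  by (rule qbinom_eqI) auto

lemma qbinom_diag [simp]: "qbinom M M = 1"
  by (rule qbinom_eqI) auto

lemma qbinom_eq_0 [simp]: "M < N \<Longrightarrow> qbinom M N = 0"
  by (simp add: qbinom_def)

lemma qbinom_Suc_Suc:
  assumes "N \<le> M"
  shows "qbinom (Suc M) (Suc N) = qbinom M (Suc N) + fps_X ^ (M - N) * qbinom M N"
proof (cases "N = M")
  case False
  with assms have NM: "Suc N \<le> M" by simp
  have pN: "qpoch (Suc N) = qpoch N * (1 - fps_X ^ Suc N)"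
    by (rule qpoch_Suc)
  have pMN: "qpoch (M - N) = qpoch (M - Suc N) * (1 - fps_X ^ (M - N))"
    using NM qpoch_Suc[of "M - Suc N"] by (simp add: Suc_diff_Suc)
  have "(qbinom M (Suc N) + fps_X ^ (M - N) * qbinom M N) * (qpoch (Suc N) * qpoch (M - N))
      = qbinom M (Suc N) * (qpoch (Suc N) * qpoch (M - Suc N)) * (1 - fps_X ^ (M - N))
        + fps_X ^ (M - N) * (qbinom M N * (qpoch N * qpoch (M - N))) * (1 - fps_X ^ Suc N)"
    by (simp only: pN pMN) (simp add: algebra_simps)
  also have "\<dots> = qpoch M * (1 - fps_X ^ (M - N) * fps_X ^ Suc N)"
    unfolding qbinom_mult_qpoch[OF NM, simplified] qbinom_mult_qpoch[OF assms] by (simp add: algebra_simps)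
  also have "\<dots> = qpoch (Suc M)"
    using assms by (simp add: qpoch_Suc flip: power_add)
  finally show ?thesis
    using assms by (intro qbinom_eqI) auto
qed simp

lemma q_binomial_theorem:
  "(\<Sum>j\<le>m. fps_X ^ (j choose 2) * qbinom m j) = (\<Prod>k<m. 1 + fps_X ^ k :: rat fps)"
proof (induction m)
  case 0
  then show ?case by (simp add: binomial_eq_0)
next
  case (Suc m)
  let ?S = "\<lambda>m. \<Sum>j\<le>m. fps_X ^ (j choose 2) * qbinom m j :: rat fps"
  have shift: "?S M = 1 + (\<Sum>j\<le>m. fps_X ^ (Suc j choose 2) * qbinom M (Suc j))"
    if "m \<le> M" "M \<le> Suc m" for M
  proof -
    have "?S M = (\<Sum>j\<le>Suc m. fps_X ^ (j choose 2) * qbinom M j)"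
      using that by (intro sum.mono_neutral_cong_left) auto
    also have "\<dots> = 1 + (\<Sum>j\<le>m. fps_X ^ (Suc j choose 2) * qbinom M (Suc j))"
      by (subst sum.atMost_Suc_shift) (simp add: binomial_eq_0)
    finally show ?thesis .
  qed
  have twist: "(\<Sum>j\<le>m. fps_X ^ (Suc j choose 2) * (fps_X ^ (m - j) * qbinom m j)) = fps_X ^ m * ?S m"
    unfolding sum_distrib_left
  proof (rule sum.cong)
    fix j assume "j \<in> {..m}"
    then have "(Suc j choose 2) + (m - j) = m + (j choose 2)"
      by (simp add: choose_two_Suc)
    then show "fps_X ^ (Suc j choose 2) * (fps_X ^ (m - j) * qbinom m j)
        = fps_X ^ m * (fps_X ^ (j choose 2) * qbinom m j :: rat fps)"
      by (metis mult.assoc power_add)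
  qed simp
  have "?S (Suc m) = 1 + (\<Sum>j\<le>m. fps_X ^ (Suc j choose 2) * qbinom (Suc m) (Suc j))"
    by (rule shift) auto
  also have "\<dots> = 1 + (\<Sum>j\<le>m. fps_X ^ (Suc j choose 2) * qbinom m (Suc j))
                    + (\<Sum>j\<le>m. fps_X ^ (Suc j choose 2) * (fps_X ^ (m - j) * qbinom m j))"
    by (simp add: qbinom_Suc_Suc distrib_left sum.distrib)
  also have "\<dots> = ?S m + fps_X ^ m * ?S m"
    by (simp only: twist shift[of m, OF order_refl le_SucI[OF order_refl]])
  also have "\<dots> = (\<Prod>k<Suc m. 1 + fps_X ^ k)"
    unfolding Suc.IH by (simp add: algebra_simps)
  finally show ?case .
qed

theorem mainTheorem17:
  shows "(\<lambda>m. fps_X ^ ((m + 1) choose 2) * inverse (qpoch m) *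
              (\<Sum>j\<le>m. fps_X ^ (j choose 2) * qbinom m j)) sums C2_gf"
proof -
  have "fps_X ^ ((m + 1) choose 2) * inverse (qpoch m) * (\<Sum>j\<le>m. fps_X ^ (j choose 2) * qbinom m j)
          = gf {\<pi> \<in> C2. length \<pi> = m}" for m
  proof -
    have "inverse (qpoch m) * qpoch m = 1"
      by (rule inverse_mult_eq_1) simp
    then have "gf {\<pi> \<in> C2. length \<pi> = m} = inverse (qpoch m) * (qpoch m * gf {\<pi> \<in> C2. length \<pi> = m})"
      by (simp flip: mult.assoc)
    then show ?thesis
      unfolding q_binomial_theorem by (simp add: qpoch_mult_gf_C2_length mult_ac)
  qed
  moreover have "(\<lambda>m. gf {\<pi> \<in> C2. length \<pi> = m}) sums gf C2"
    by (rule gf_sums_length_slices) (simp add: C2_iff_successively length_le_op_size)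
  ultimately show ?thesis
    by (simp add: C2_gf_eq_gf)
qed

end
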